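(* Let $G$ be a graph, let $D$ be a minimum dominating set of $G$ and $\gamma=|D|$, and let $\nabla$ be an integer with $\nabla>\nabla_1^B(G)$. Let $$\hat D=\{v\in V(G): \text{for all } A\subseteq D\setminus\{v\} \text{ with } N(v)\subseteq N[A] \text{ we have } |A|>2\nabla-1\}.$$ Then $|\hat D\setminus D|<\rho(G)\cdot\gamma$.
   Context: Graphs are finite, undirected and simple. $N(v)$ is the open neighbourhood of $v$, $N[v]=N(v)\cup\{v\}$, and $N[A]=\bigcup_{a\in A}N[a]$. A dominating set is a set $D$ with $N[D]=V(G)$. A graph $H$ is a $1$-shallow minor of $G$ if it is obtained from $G$ by deleting vertices and edges and contracting pairwise vertex-disjoint connected subgraphs of radius at most $1$. $\nabla_1^B(G)$ is the maximum of $|E(H)|/|V(H)|$ over all bipartite $1$-shallow minors $H$ of $G$. The Hall ratio $\rho(G)$ is $\max\{|V(H)|/\alpha(H): H\subseteq G\}$, where $\alpha(H)$ is the size of a largest independent set of $H$. *)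

theory Defs
  imports Complex_Main
begin

definition graph :: "'a set \<Rightarrow> ('a \<Rightarrow> 'a \<Rightarrow> bool) \<Rightarrow> bool" where
  "graph V E \<longleftrightarrow> finite V \<and> (\<forall>x y. E x y \<longrightarrow> x \<in> V \<and> y \<in> V \<and> x \<noteq> y \<and> E y x)"

definition nbhd :: "'a set \<Rightarrow> ('a \<Rightarrow> 'a \<Rightarrow> bool) \<Rightarrow> 'a \<Rightarrow> 'a set" where
  "nbhd V E v = {u \<in> V. E v u}"

definition cnbhd_set :: "'a set \<Rightarrow> ('a \<Rightarrow> 'a \<Rightarrow> bool) \<Rightarrow> 'a set \<Rightarrow> 'a set" where
  "cnbhd_set V E A = A \<union> (\<Union>a\<in>A. nbhd V E a)"

definition dominating :: "'a set \<Rightarrow> ('a \<Rightarrow> 'a \<Rightarrow> bool) \<Rightarrow> 'a set \<Rightarrow> bool" where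
  "dominating V E D \<longleftrightarrow> D \<subseteq> V \<and> cnbhd_set V E D = V"

definition min_dominating :: "'a set \<Rightarrow> ('a \<Rightarrow> 'a \<Rightarrow> bool) \<Rightarrow> 'a set \<Rightarrow> bool" where
  "min_dominating V E D \<longleftrightarrow> dominating V E D \<and> (\<forall>D'. dominating V E D' \<longrightarrow> card D \<le> card D')"

definition num_edges :: "'b set \<Rightarrow> ('b \<Rightarrow> 'b \<Rightarrow> bool) \<Rightarrow> nat" where
  "num_edges V E = card {{x, y} | x y. x \<in> V \<and> y \<in> V \<and> E x y}"

definition bipartite :: "'b set \<Rightarrow> ('b \<Rightarrow> 'b \<Rightarrow> bool) \<Rightarrow> bool" where
  "bipartite V E \<longleftrightarrow> (\<exists>A \<subseteq> V. \<forall>x\<in>V. \<forall>y\<in>V. E x y \<longrightarrow> (x \<in> A \<longleftrightarrow> y \<notin> A))"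

text \<open>1-shallow minors, represented with the branch sets as vertices: each branch set is a
  vertex set of G spanning a connected subgraph of radius at most 1 (i.e. it has a centre adjacent
  to all its other vertices), branch sets are pairwise disjoint, and an edge of H between two
  branch sets requires an edge of G between them (edges may be deleted). Vertices of G not in
  any branch set are deleted.\<close>
definition shallow1_minor :: "'a set \<Rightarrow> ('a \<Rightarrow> 'a \<Rightarrow> bool) \<Rightarrow> 'a set set \<Rightarrow> ('a set \<Rightarrow> 'a set \<Rightarrow> bool) \<Rightarrow> bool" where
  "shallow1_minor V E VH EH \<longleftrightarrow>
     graph VH EH \<and>
     (\<forall>B\<in>VH. B \<subseteq> V \<and> (\<exists>c\<in>B. \<forall>v\<in>B. v = c \<or> E c v)) \<and>
     (\<forall>B1\<in>VH. \<forall>B2\<in>VH. B1 \<noteq> B2 \<longrightarrow> B1 \<inter> B2 = {}) \<and>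
     (\<forall>B1 B2. EH B1 B2 \<longrightarrow> (\<exists>u\<in>B1. \<exists>v\<in>B2. E u v))"

text \<open>nabla_1^B(G): maximum edge density over bipartite 1-shallow minors (0/0 = 0 for the empty minor).\<close>
definition nabla1B :: "'a set \<Rightarrow> ('a \<Rightarrow> 'a \<Rightarrow> bool) \<Rightarrow> real" where
  "nabla1B V E = Max {real (num_edges VH EH) / real (card VH) | VH EH.
                        shallow1_minor V E VH EH \<and> bipartite VH EH}"

definition independent :: "'a set \<Rightarrow> ('a \<Rightarrow> 'a \<Rightarrow> bool) \<Rightarrow> 'a set \<Rightarrow> bool" where
  "independent V E I \<longleftrightarrow> I \<subseteq> V \<and> (\<forall>x\<in>I. \<forall>y\<in>I. \<not> E x y)"

definition alpha :: "'a set \<Rightarrow> ('a \<Rightarrow> 'a \<Rightarrow> bool) \<Rightarrow> nat" where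
  "alpha V E = Max {card I | I. independent V E I}"

definition subgraph :: "'a set \<Rightarrow> ('a \<Rightarrow> 'a \<Rightarrow> bool) \<Rightarrow> 'a set \<Rightarrow> ('a \<Rightarrow> 'a \<Rightarrow> bool) \<Rightarrow> bool" where
  "subgraph V E W F \<longleftrightarrow> graph W F \<and> W \<subseteq> V \<and> (\<forall>x y. F x y \<longrightarrow> E x y)"

text \<open>Hall ratio rho(G) (the empty subgraph contributes 0/0 = 0).\<close>
definition hall_ratio :: "'a set \<Rightarrow> ('a \<Rightarrow> 'a \<Rightarrow> bool) \<Rightarrow> real" where
  "hall_ratio V E = Max {real (card W) / real (alpha W F) | W F. subgraph V E W F}"

definition Dhat :: "'a set \<Rightarrow> ('a \<Rightarrow> 'a \<Rightarrow> bool) \<Rightarrow> 'a set \<Rightarrow> int \<Rightarrow> 'a set" where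
  "Dhat V E D nabla = {v \<in> V. \<forall>A. A \<subseteq> D - {v} \<and> nbhd V E v \<subseteq> cnbhd_set V E A
                                   \<longrightarrow> int (card A) > 2 * nabla - 1}"

end

theory Submission
  imports Defs
begin

text \<open>If \<open>Dhat - D\<close> had at least \<open>\<rho>(G) \<gamma>\<close> vertices, it would contain an independent set
  \<open>I\<close> of exactly \<open>\<gamma>\<close> vertices. Assign every vertex outside \<open>D \<union> I\<close> to a neighbour in \<open>D\<close>;
  the stars so formed around the vertices of \<open>D\<close>, together with the singletons of \<open>I\<close>, are the
  branch sets of a bipartite 1-shallow minor on \<open>2\<gamma>\<close> vertices. For \<open>v \<in> I\<close> the stars meeting
  \<open>N(v)\<close> dominate \<open>N(v)\<close>, so by the definition of \<open>Dhat\<close> there are at least \<open>2\<nabla>\<close> of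
  them; hence the minor has at least \<open>2\<nabla>\<gamma>\<close> edges and density at least \<open>\<nabla> > \<nabla>\<^sub>1\<^sup>B(G)\<close>,
  a contradiction.\<close>

lemma finite_bounded_ratios: "finite {real n / real m | n m. n \<le> N \<and> m \<le> M}"
proof -
  have "{real n / real m | n m. n \<le> N \<and> m \<le> M} = (\<lambda>(n, m). real n / real m) ` ({..N} \<times> {..M})"
    by auto
  then show ?thesis by simp
qed

lemma card_le_alpha:
  assumes "finite W" "independent W F I"
  shows "card I \<le> alpha W F"
proof -
  have "{card I | I. independent W F I} \<subseteq> {..card W}"
    using \<open>finite W\<close> by (auto simp: independent_def intro: card_mono)
  then show ?thesis
    unfolding alpha_def using assms(2) by (intro Max_ge) (auto intro: finite_subset)
qed

lemma alpha_le_card: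
  assumes "finite W"
  shows "alpha W F \<le> card W"
proof -
  have "{card I | I. independent W F I} \<subseteq> {..card W}"
    using assms by (auto simp: independent_def intro: card_mono)
  moreover have "independent W F {}" by (simp add: independent_def)
  ultimately show ?thesis
    unfolding alpha_def by (subst Max_le_iff) (auto intro: finite_subset)
qed

lemma obtain_independent_card_alpha:
  assumes "finite W"
  obtains I where "independent W F I" "card I = alpha W F"
proof -
  let ?S = "{card I | I. independent W F I}"
  have "?S \<subseteq> {..card W}"
    using assms by (auto simp: independent_def intro: card_mono)
  moreover have "independent W F {}" by (simp add: independent_def)
  ultimately have "alpha W F \<in> ?S"
    unfolding alpha_def by (intro Max_in) (auto intro: finite_subset)
  then obtain I where "independent W F I" "card I = alpha W F" by auto
  then show ?thesis by (rule that)
qed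

lemma alpha_pos:
  assumes "graph W F" "W \<noteq> {}"
  shows "0 < alpha W F"
proof -
  obtain w where "w \<in> W" using assms(2) by blast
  then have "independent W F {w}"
    using assms(1) by (auto simp: independent_def graph_def)
  then show ?thesis
    using card_le_alpha[of W F "{w}"] assms(1) by (simp add: graph_def)
qed

lemma hall_ratio_ge:
  assumes "graph V E" "subgraph V E W F"
  shows "real (card W) / real (alpha W F) \<le> hall_ratio V E"
  unfolding hall_ratio_def
proof (rule Max_ge)
  have "finite V" using assms(1) by (simp add: graph_def)
  have "card W' \<le> card V \<and> alpha W' F' \<le> card V" if "subgraph V E W' F'" for W' F'
  proof -
    have "W' \<subseteq> V" using that by (simp add: subgraph_def)
    then show ?thesis
      using \<open>finite V\<close> alpha_le_card[of W' F'] card_mono[of V W']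
      by (meson finite_subset le_trans)
  qed
  then show "finite {real (card W) / real (alpha W F) | W F. subgraph V E W F}"
    by (intro finite_subset[OF _ finite_bounded_ratios[of "card V" "card V"]]) blast
  show "real (card W) / real (alpha W F) \<in> {real (card W) / real (alpha W F) | W F. subgraph V E W F}"
    using assms(2) by blast
qed

lemma hall_ratio_ge_one:
  assumes "graph V E" "V \<noteq> {}"
  shows "1 \<le> hall_ratio V E"
proof -
  have "subgraph V E V E" using assms(1) by (simp add: subgraph_def)
  then have "real (card V) / real (alpha V E) \<le> hall_ratio V E"
    using hall_ratio_ge assms(1) by blast
  moreover have "1 \<le> real (card V) / real (alpha V E)"
    using alpha_le_card[of V E] alpha_pos[OF assms] assms(1) by (simp add: graph_def le_divide_eq_1)
  ultimately show ?thesis by linarith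
qed

lemma obtain_independent_subset_card:
  assumes "graph V E" "V \<noteq> {}" "X \<subseteq> V" "hall_ratio V E * real k \<le> real (card X)"
  obtains I where "I \<subseteq> X" "independent V E I" "card I = k"
proof (cases "X = {}")
  case True
  then have "k = 0"
    using assms(4) hall_ratio_ge_one[OF assms(1,2)] by (simp add: mult_le_0_iff)
  then show ?thesis
    using that[of "{}"] by (simp add: independent_def)
next
  case False
  define F where "F x y \<longleftrightarrow> E x y \<and> x \<in> X \<and> y \<in> X" for x y
  have "finite X" using assms(1,3) by (auto simp: graph_def intro: finite_subset)
  have "subgraph V E X F"
    using assms(1,3) \<open>finite X\<close> by (auto simp: subgraph_def graph_def F_def)
  then have "graph X F" by (simp add: subgraph_def)
  have "real (card X) \<le> hall_ratio V E * real (alpha X F)"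
    using hall_ratio_ge[OF assms(1) \<open>subgraph V E X F\<close>] alpha_pos[OF \<open>graph X F\<close> False]
    by (simp add: divide_le_eq)
  then have "hall_ratio V E * real k \<le> hall_ratio V E * real (alpha X F)"
    using assms(4) by linarith
  then have "k \<le> alpha X F"
    using hall_ratio_ge_one[OF assms(1,2)] by (simp add: mult_le_cancel_left_pos)
  obtain J where J: "independent X F J" "card J = alpha X F"
    using obtain_independent_card_alpha[OF \<open>finite X\<close>] .
  obtain I where "I \<subseteq> J" "card I = k"
    using obtain_subset_with_card_n \<open>k \<le> alpha X F\<close> J(2) by metis
  moreover have "independent V E I"
    using J(1) \<open>I \<subseteq> J\<close> assms(3) unfolding independent_def F_def by blast
  moreover have "J \<subseteq> X" using J(1) by (simp add: independent_def)
  ultimately show ?thesis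
    using that by blast
qed

lemma nabla1B_ge:
  assumes "graph V E" "shallow1_minor V E VH EH" "bipartite VH EH"
  shows "real (num_edges VH EH) / real (card VH) \<le> nabla1B V E"
  unfolding nabla1B_def
proof (rule Max_ge)
  have "finite V" using assms(1) by (simp add: graph_def)
  have "num_edges W F \<le> card (Pow (Pow V)) \<and> card W \<le> card (Pow V)"
    if "shallow1_minor V E W F" for W F
  proof -
    have "W \<subseteq> Pow V" using that by (auto simp: shallow1_minor_def)
    moreover then have "{{x, y} | x y. x \<in> W \<and> y \<in> W \<and> F x y} \<subseteq> Pow (Pow V)" by auto
    ultimately show ?thesis
      unfolding num_edges_def using \<open>finite V\<close> by (simp add: card_mono)
  qed
  then show "finite {real (num_edges VH EH) / real (card VH) | VH EH.
                      shallow1_minor V E VH EH \<and> bipartite VH EH}"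
    by (intro finite_subset[OF _ finite_bounded_ratios[of "card (Pow (Pow V))" "card (Pow V)"]])
      blast
  show "real (num_edges VH EH) / real (card VH) \<in> {real (num_edges VH EH) / real (card VH) | VH EH.
                      shallow1_minor V E VH EH \<and> bipartite VH EH}"
    using assms(2,3) by blast
qed

lemma Dhat_subset: "Dhat V E D nabla \<subseteq> V"
  by (auto simp: Dhat_def)

lemma Dhat_card_ge:
  assumes "v \<in> Dhat V E D nabla" "A \<subseteq> D - {v}" "nbhd V E v \<subseteq> cnbhd_set V E A"
  shows "2 * nabla \<le> int (card A)"
proof -
  have "2 * nabla - 1 < int (card A)"
    using assms unfolding Dhat_def by blast
  then show ?thesis by simp
qed

lemma dominating_nonempty:
  assumes "dominating V E D" "V \<noteq> {}"
  shows "D \<noteq> {}"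
  using assms by (auto simp: dominating_def cnbhd_set_def)

locale independent_outside_dominating =
  fixes V :: "'a set" and E :: "'a \<Rightarrow> 'a \<Rightarrow> bool" and D I :: "'a set"
  assumes graph: "graph V E"
    and dominating: "dominating V E D"
    and independent: "independent V E I"
    and disjoint: "I \<inter> D = {}"
begin

lemma finite_D: "finite D" and finite_I: "finite I"
proof -
  have "finite V" "D \<subseteq> V" "I \<subseteq> V"
    using graph dominating independent by (auto simp: graph_def dominating_def independent_def)
  then show "finite D" "finite I" by (auto dest: finite_subset)
qed

lemma edge_sym: "E x y \<Longrightarrow> E y x"
  using graph by (simp add: graph_def)

definition dominator :: "'a \<Rightarrow> 'a" where
  "dominator u = (SOME d. d \<in> D \<and> E d u)"

lemma dominator_dominates:
  assumes "u \<in> V - D"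
  shows "dominator u \<in> D \<and> E (dominator u) u"
proof -
  have "u \<in> cnbhd_set V E D" using dominating assms by (simp add: dominating_def)
  then have "\<exists>d. d \<in> D \<and> E d u"
    using assms edge_sym by (auto simp: cnbhd_set_def nbhd_def)
  then show ?thesis unfolding dominator_def by (rule someI_ex)
qed

definition branch :: "'a \<Rightarrow> 'a set" where
  "branch d = insert d {u \<in> V - D - I. dominator u = d}"

lemma branch_subset: "d \<in> D \<Longrightarrow> branch d \<subseteq> V"
  using dominating by (auto simp: branch_def dominating_def)

lemma branch_centre: "u \<in> branch d \<Longrightarrow> u = d \<or> E d u"
  using dominator_dominates by (auto simp: branch_def)

lemma branch_disjoint: "d \<in> D \<Longrightarrow> d' \<in> D \<Longrightarrow> d \<noteq> d' \<Longrightarrow> branch d \<inter> branch d' = {}"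
  by (auto simp: branch_def)

lemma inj_on_branch: "inj_on branch D"
proof (rule inj_onI, rule ccontr)
  fix d d' assume "d \<in> D" "d' \<in> D" "branch d = branch d'" "d \<noteq> d'"
  then show False using branch_disjoint by (auto simp: branch_def)
qed

lemma notin_branch: "v \<in> I \<Longrightarrow> d \<in> D \<Longrightarrow> v \<notin> branch d"
  using disjoint by (auto simp: branch_def)

lemma singleton_ne_branch: "v \<in> I \<Longrightarrow> d \<in> D \<Longrightarrow> {v} \<noteq> branch d"
  using notin_branch by blast

definition attached :: "'a \<Rightarrow> 'a set" where
  "attached v = {d \<in> D. \<exists>u\<in>branch d. E v u}"

lemma attached_subset: "v \<in> I \<Longrightarrow> attached v \<subseteq> D - {v}"
  using disjoint by (auto simp: attached_def)

lemma nbhd_subset_cnbhd_attached: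
  assumes "v \<in> I"
  shows "nbhd V E v \<subseteq> cnbhd_set V E (attached v)"
proof
  fix u assume "u \<in> nbhd V E v"
  then have "u \<in> V" "E v u" by (auto simp: nbhd_def)
  have "u \<notin> I" using independent assms \<open>E v u\<close> by (auto simp: independent_def)
  show "u \<in> cnbhd_set V E (attached v)"
  proof (cases "u \<in> D")
    case True
    then have "u \<in> attached v" using \<open>E v u\<close> by (auto simp: attached_def branch_def)
    then show ?thesis by (simp add: cnbhd_set_def)
  next
    case False
    then have "u \<in> branch (dominator u)" "E (dominator u) u" "dominator u \<in> D"
      using \<open>u \<in> V\<close> \<open>u \<notin> I\<close> dominator_dominates by (auto simp: branch_def)
    then have "dominator u \<in> attached v" "u \<in> nbhd V E (dominator u)"
      using \<open>E v u\<close> \<open>u \<in> V\<close> by (auto simp: attached_def nbhd_def)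
    then show ?thesis by (auto simp: cnbhd_set_def)
  qed
qed

definition minor_vertices :: "'a set set" where
  "minor_vertices = (\<lambda>v. {v}) ` I \<union> branch ` D"

definition minor_edge :: "'a set \<Rightarrow> 'a set \<Rightarrow> bool" where
  "minor_edge X Y \<longleftrightarrow> (\<exists>v\<in>I. \<exists>d\<in>attached v. {X, Y} = {{v}, branch d})"

lemma minor_edgeE:
  assumes "minor_edge X Y"
  obtains v d u where "v \<in> I" "d \<in> D" "u \<in> branch d" "E v u"
    "X = {v} \<and> Y = branch d \<or> X = branch d \<and> Y = {v}"
  using assms unfolding minor_edge_def attached_def doubleton_eq_iff by blast

lemma minor_vertices_cases:
  assumes "X \<in> minor_vertices"
  obtains (singleton) v where "v \<in> I" "X = {v}" | (branch) d where "d \<in> D" "X = branch d"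
  using assms unfolding minor_vertices_def by blast

lemma graph_minor: "graph minor_vertices minor_edge"
  unfolding graph_def
proof (intro conjI allI impI)
  show "finite minor_vertices" using finite_I finite_D by (simp add: minor_vertices_def)
  fix X Y assume "minor_edge X Y"
  then obtain v d where "v \<in> I" "d \<in> D" "X = {v} \<and> Y = branch d \<or> X = branch d \<and> Y = {v}"
    by (rule minor_edgeE)
  then show "X \<in> minor_vertices" "Y \<in> minor_vertices" "X \<noteq> Y"
    using singleton_ne_branch by (auto simp: minor_vertices_def)
  show "minor_edge Y X"
    using \<open>minor_edge X Y\<close> by (simp add: minor_edge_def insert_commute)
qed

lemma shallow1_minor: "shallow1_minor V E minor_vertices minor_edge"
  unfolding shallow1_minor_def
proof (intro conjI)
  show "graph minor_vertices minor_edge" by (rule graph_minor)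
  show "\<forall>X\<in>minor_vertices. X \<subseteq> V \<and> (\<exists>c\<in>X. \<forall>u\<in>X. u = c \<or> E c u)"
  proof
    fix X assume "X \<in> minor_vertices"
    then show "X \<subseteq> V \<and> (\<exists>c\<in>X. \<forall>u\<in>X. u = c \<or> E c u)"
    proof (cases rule: minor_vertices_cases)
      case (singleton v)
      then show ?thesis using independent by (auto simp: independent_def)
    next
      case (branch d)
      then show ?thesis using branch_subset branch_centre by (auto simp: branch_def)
    qed
  qed
  show "\<forall>X\<in>minor_vertices. \<forall>Y\<in>minor_vertices. X \<noteq> Y \<longrightarrow> X \<inter> Y = {}"
  proof (intro ballI impI)
    fix X Y assume "X \<in> minor_vertices" "Y \<in> minor_vertices" "X \<noteq> Y"
    then show "X \<inter> Y = {}"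
    proof (cases rule: minor_vertices_cases)
      case (singleton v)
      from \<open>Y \<in> minor_vertices\<close> show ?thesis
        using singleton \<open>X \<noteq> Y\<close> notin_branch
        by (cases rule: minor_vertices_cases) auto
    next
      case (branch d)
      from \<open>Y \<in> minor_vertices\<close> show ?thesis
        using branch \<open>X \<noteq> Y\<close> notin_branch branch_disjoint
        by (cases rule: minor_vertices_cases) (blast, metis)
    qed
  qed
  show "\<forall>X Y. minor_edge X Y \<longrightarrow> (\<exists>x\<in>X. \<exists>y\<in>Y. E x y)"
    using edge_sym by (blast elim: minor_edgeE)
qed

lemma bipartite_minor: "bipartite minor_vertices minor_edge"
  unfolding bipartite_def
proof (intro exI[of _ "(\<lambda>v. {v}) ` I"] conjI ballI impI)
  show "(\<lambda>v. {v}) ` I \<subseteq> minor_vertices" by (auto simp: minor_vertices_def)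
next
  fix X Y assume "minor_edge X Y"
  then show "X \<in> (\<lambda>v. {v}) ` I \<longleftrightarrow> Y \<notin> (\<lambda>v. {v}) ` I"
    using singleton_ne_branch by (elim minor_edgeE) blast
qed

lemma card_minor_vertices: "card minor_vertices = card I + card D"
proof -
  have "card minor_vertices = card ((\<lambda>v. {v}) ` I) + card (branch ` D)"
    unfolding minor_vertices_def using finite_I finite_D singleton_ne_branch
    by (intro card_Un_disjoint) auto
  also have "\<dots> = card I + card D"
    using inj_on_branch by (simp add: card_image)
  finally show ?thesis .
qed

lemma num_edges_minor: "num_edges minor_vertices minor_edge = (\<Sum>v\<in>I. card (attached v))"
proof -
  let ?edge = "\<lambda>(v, d). {{v}, branch d}"
  have "{{X, Y} | X Y. X \<in> minor_vertices \<and> Y \<in> minor_vertices \<and> minor_edge X Y}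
        = ?edge ` (SIGMA v:I. attached v)"
  proof (intro equalityI subsetI)
    fix e assume "e \<in> {{X, Y} | X Y. X \<in> minor_vertices \<and> Y \<in> minor_vertices \<and> minor_edge X Y}"
    then obtain X Y where "e = {X, Y}" "minor_edge X Y" by blast
    then obtain v d where "v \<in> I" "d \<in> attached v" "e = {{v}, branch d}"
      unfolding minor_edge_def by blast
    then show "e \<in> ?edge ` (SIGMA v:I. attached v)" by force
  next
    fix e assume "e \<in> ?edge ` (SIGMA v:I. attached v)"
    then obtain v d where "v \<in> I" "d \<in> attached v" "e = {{v}, branch d}" by blast
    moreover then have "{v} \<in> minor_vertices" "branch d \<in> minor_vertices" "minor_edge {v} (branch d)"
      by (auto simp: minor_vertices_def attached_def minor_edge_def)
    ultimately show "e \<in> {{X, Y} | X Y. X \<in> minor_vertices \<and> Y \<in> minor_vertices \<and> minor_edge X Y}"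
      by blast
  qed
  moreover have "inj_on ?edge (SIGMA v:I. attached v)"
  proof (rule inj_onI, clarsimp)
    fix v d v' d'
    assume "v \<in> I" "d \<in> attached v" "v' \<in> I" "d' \<in> attached v'"
      and eq: "{{v}, branch d} = {{v'}, branch d'}"
    then have "d \<in> D" "d' \<in> D" by (auto simp: attached_def)
    then have "v = v' \<and> branch d = branch d'"
      using eq singleton_ne_branch \<open>v \<in> I\<close> by (auto simp: doubleton_eq_iff)
    then show "v = v' \<and> d = d'"
      using inj_on_branch \<open>d \<in> D\<close> \<open>d' \<in> D\<close> by (auto dest: inj_onD)
  qed
  moreover have "finite (attached v)" for v
    using finite_D by (simp add: attached_def)
  ultimately show ?thesis
    unfolding num_edges_def using finite_I by (simp add: card_image card_SigmaI)
qed

end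

lemma nabla1B_ge_of_independent_in_Dhat:
  assumes "graph V E" "dominating V E D" "D \<noteq> {}"
    and "independent V E I" "I \<subseteq> Dhat V E D nabla - D" "card I = card D"
  shows "real_of_int nabla \<le> nabla1B V E"
proof -
  have "I \<inter> D = {}" using assms(5) by blast
  with assms(1,2,4) interpret independent_outside_dominating V E D I
    by unfold_locales
  have "2 * nabla \<le> int (card (attached v))" if "v \<in> I" for v
    using Dhat_card_ge[OF _ attached_subset[OF that] nbhd_subset_cnbhd_attached[OF that]]
      assms(5) that by blast
  then have "int (card D) * (2 * nabla) \<le> (\<Sum>v\<in>I. int (card (attached v)))"
    using sum_mono[of I "\<lambda>_. 2 * nabla"] assms(6) by simp
  also have "\<dots> = int (num_edges minor_vertices minor_edge)"
    by (simp add: num_edges_minor)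
  finally have "real_of_int (int (card D) * (2 * nabla))
      \<le> real_of_int (int (num_edges minor_vertices minor_edge))"
    by (simp only: of_int_le_iff)
  then have "real_of_int nabla * real (card minor_vertices) \<le> real (num_edges minor_vertices minor_edge)"
    using assms(6) card_minor_vertices by (simp add: mult_ac)
  moreover have "0 < card minor_vertices"
    using assms(3) finite_D card_minor_vertices by auto
  ultimately have "real_of_int nabla
      \<le> real (num_edges minor_vertices minor_edge) / real (card minor_vertices)"
    by (simp add: le_divide_eq)
  also have "\<dots> \<le> nabla1B V E"
    using nabla1B_ge[OF assms(1) shallow1_minor bipartite_minor] .
  finally show ?thesis .
qed

theorem lemma3:
  fixes V :: "'a set" and E :: "'a \<Rightarrow> 'a \<Rightarrow> bool" and D :: "'a set" and nabla :: int
  assumes "graph V E"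
    and "V \<noteq> {}"
    and "min_dominating V E D"
    and "real_of_int nabla > nabla1B V E"
  shows "real (card (Dhat V E D nabla - D)) < hall_ratio V E * real (card D)"
proof (rule ccontr)
  assume "\<not> ?thesis"
  then have large: "hall_ratio V E * real (card D) \<le> real (card (Dhat V E D nabla - D))"
    by simp
  have "Dhat V E D nabla - D \<subseteq> V" using Dhat_subset[of V E D nabla] by blast
  from obtain_independent_subset_card[OF assms(1,2) this large]
  obtain I where I: "I \<subseteq> Dhat V E D nabla - D" "independent V E I" "card I = card D" .
  have "dominating V E D" using assms(3) by (simp add: min_dominating_def)
  then have "real_of_int nabla \<le> nabla1B V E"
    using nabla1B_ge_of_independent_in_Dhat[OF assms(1) _ _ I(2,1,3)] dominating_nonempty assms(2)
    by blast
  then show False using assms(4) by linarith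
qed

end
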